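(* The point spectrum of $\dot I_{\mathrm{A}_{\frac12\infty}}$ on $\overline H_{\mathrm{A}_{\frac12\infty},\mathbb{C}}$ is empty, and the point spectrum of $\dot I_{\mathrm{D}_{\frac12\infty}}$ on $\overline H_{\mathrm{D}_{\frac12\infty},\mathbb{C}}$ consists of the single eigenvalue $2$, with multiplicity $1$. In particular, for both $W$, $\ker(\dot I_W)\cap\overline H_{W,\mathbb{C}}=\{0\}$.
   Context: Index sets: $C_{W,0}=\{c_0^{(n)}:n\ge1\}$ (type $\mathrm{A}_{\frac12\infty}$) or $\{c_0^{(n)}:n\ge1\}\cup\{c_0^+,c_0^-\}$ (type $\mathrm{D}_{\frac12\infty}$); $C_{W,1}=\{c_1^{(n)}:n\ge1\}$; $C_W=C_{W,0}\sqcup C_{W,1}$. Adjacency: $c_0^{(n)}$ adjacent to $c_1^{(n)}$ and $c_1^{(n+1)}$; in type D, $c_0^\pm$ adjacent to $c_1^{(1)}$; no others. $\overline H_{W,\mathbb{C}}=\ell^2(C_W)$ with orthonormal basis $\{\gamma_c\}$. $\dot I_W$ is the bounded self-adjoint operator with matrix $\langle\dot I_W\gamma_c,\gamma_{c'}\rangle=2$ if $c=c'$, $-1$ if $c,c'$ adjacent, $0$ otherwise. *)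

theory Defs
  imports "HOL-Analysis.Analysis"
begin

datatype dtype = A_half | D_half

text \<open>Vertices: C0 n = c_0^(n), C1 n = c_1^(n), C0p = c_0^+, C0m = c_0^-.\<close>
datatype node = C0 nat | C1 nat | C0p | C0m

definition CW0 :: "dtype \<Rightarrow> node set" where
  "CW0 W = {C0 n | n. n \<ge> 1} \<union> (if W = D_half then {C0p, C0m} else {})"

definition CW1 :: "dtype \<Rightarrow> node set" where
  "CW1 W = {C1 n | n. n \<ge> 1}"

definition CW :: "dtype \<Rightarrow> node set" where
  "CW W = CW0 W \<union> CW1 W"

definition adj0 :: "dtype \<Rightarrow> node \<Rightarrow> node \<Rightarrow> bool" where
  "adj0 W c c' \<longleftrightarrow>
     (\<exists>n\<ge>1. c = C0 n \<and> (c' = C1 n \<or> c' = C1 (n + 1)))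
   \<or> (W = D_half \<and> (c = C0p \<or> c = C0m) \<and> c' = C1 1)"

definition adj :: "dtype \<Rightarrow> node \<Rightarrow> node \<Rightarrow> bool" where
  "adj W c c' \<longleftrightarrow> c \<in> CW W \<and> c' \<in> CW W \<and> (adj0 W c c' \<or> adj0 W c' c)"

definition Imat :: "dtype \<Rightarrow> node \<Rightarrow> node \<Rightarrow> complex" where
  "Imat W c c' = (if c \<in> CW W \<and> c' \<in> CW W then
      (if c = c' then 2 else if adj W c c' then -1 else 0) else 0)"

definition l2 :: "dtype \<Rightarrow> (node \<Rightarrow> complex) \<Rightarrow> bool" where
  "l2 W f \<longleftrightarrow> (\<forall>c. c \<notin> CW W \<longrightarrow> f c = 0) \<and> (\<lambda>c. (cmod (f c))\<^sup>2) summable_on CW W"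

definition Iop :: "dtype \<Rightarrow> (node \<Rightarrow> complex) \<Rightarrow> node \<Rightarrow> complex" where
  "Iop W f c' = (\<Sum>\<^sub>\<infinity>c\<in>CW W. Imat W c c' * f c)"

definition eigenspace :: "dtype \<Rightarrow> complex \<Rightarrow> (node \<Rightarrow> complex) set" where
  "eigenspace W \<mu> = {f. l2 W f \<and> Iop W f = (\<lambda>c. \<mu> * f c)}"

definition point_spectrum :: "dtype \<Rightarrow> complex set" where
  "point_spectrum W = {\<mu>. \<exists>f\<in>eigenspace W \<mu>. f \<noteq> (\<lambda>_. 0)}"

end

theory Submission
  imports Defs
begin

(* Along the half-infinite path C1 1, C0 1, C1 2, C0 2, ... an eigenvector for \<mu> satisfies
   b (k+2) = t * b (k+1) - b k with t = 2 - \<mu>, a recurrence that conserves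
   b k^2 - t * b k * b (k+1) + b (k+1)^2. Square summability forces b \<longlonglongrightarrow> 0, so the
   invariant vanishes. In type A the boundary value b 0 = 0 then kills every solution. In type D
   the fork gives t * b 0 = 2 * b 1, hence b 1 = \<plusminus>b 0; a nonzero solution would then have
   constant modulus, so b = 0 and the eigenvector lives on the two fork vertices, which forces
   \<mu> = 2 and values of opposite sign there. *)

lemma mem_CW [simp]:
  "C0 n \<in> CW W \<longleftrightarrow> n \<ge> 1" "C1 n \<in> CW W \<longleftrightarrow> n \<ge> 1"
  "C0p \<in> CW W \<longleftrightarrow> W = D_half" "C0m \<in> CW W \<longleftrightarrow> W = D_half"
  by (auto simp: CW_def CW0_def CW1_def)

lemma Iop_eq_neighbours:
  assumes "c' \<in> CW W" "finite {c. adj W c c'}"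
  shows "Iop W f c' = 2 * f c' - (\<Sum>c | adj W c c'. f c)"
proof -
  let ?N = "{c. adj W c c'}"
  have N_sub: "?N \<subseteq> CW W" and c'_notin: "c' \<notin> ?N"
    by (auto simp: adj_def adj0_def)
  have "Iop W f c' = (\<Sum>c\<in>insert c' ?N. Imat W c c' * f c)"
    unfolding Iop_def using assms N_sub
    by (subst infsum_cong_neutral[where T = "insert c' ?N"]) (auto simp: Imat_def)
  also have "\<dots> = 2 * f c' - (\<Sum>c\<in>?N. f c)"
    using assms N_sub c'_notin by (auto simp: Imat_def sum_negf[symmetric] intro!: sum.cong)
  finally show ?thesis .
qed

lemma Iop_C0:
  assumes "n \<ge> 1"
  shows "Iop W f (C0 n) = 2 * f (C0 n) - f (C1 n) - f (C1 (Suc n))"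
proof -
  have "{c. adj W c (C0 n)} = {C1 n, C1 (Suc n)}"
    using assms by (auto simp: adj_def adj0_def)
  then show ?thesis using assms by (simp add: Iop_eq_neighbours)
qed

lemma Iop_C1:
  assumes "n \<ge> 2"
  shows "Iop W f (C1 n) = 2 * f (C1 n) - f (C0 n) - f (C0 (n - 1))"
proof -
  have "{c. adj W c (C1 n)} = {C0 n, C0 (n - 1)}"
    using assms by (auto simp: adj_def adj0_def)
  then show ?thesis using assms by (simp add: Iop_eq_neighbours)
qed

lemma Iop_A_half_C1_1: "Iop A_half f (C1 1) = 2 * f (C1 1) - f (C0 1)"
proof -
  have "{c. adj A_half c (C1 1)} = {C0 1}"
    by (auto simp: adj_def adj0_def)
  then show ?thesis by (simp add: Iop_eq_neighbours)
qed

lemma Iop_D_half_C1_1: "Iop D_half f (C1 1) = 2 * f (C1 1) - f (C0 1) - f C0p - f C0m"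
proof -
  have "{c. adj D_half c (C1 1)} = {C0 1, C0p, C0m}"
    by (auto simp: adj_def adj0_def)
  then show ?thesis by (simp add: Iop_eq_neighbours)
qed

lemma Iop_D_half_fork:
  assumes "c \<in> {C0p, C0m}"
  shows "Iop D_half f c = 2 * f c - f (C1 1)"
proof -
  have "{c'. adj D_half c' c} = {C1 1}"
    using assms by (auto simp: adj_def adj0_def)
  moreover have "c \<in> CW D_half"
    using assms by auto
  ultimately show ?thesis by (simp add: Iop_eq_neighbours)
qed

lemma Iop_outside: "c' \<notin> CW W \<Longrightarrow> Iop W f c' = 0"
  unfolding Iop_def Imat_def by simp

text \<open>Index 0 gives \<open>C0 0 \<notin> CW W\<close>, where every element of \<open>l2 W\<close> vanishes; this is the
  boundary value of the recurrence in type A.\<close>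
definition path_node :: "nat \<Rightarrow> node" where
  "path_node k = (if odd k then C1 ((k + 1) div 2) else C0 (k div 2))"

lemma path_node_0 [simp]: "path_node 0 = C0 0"
  by (simp add: path_node_def)

lemma inj_path_node: "inj path_node"
  by (rule injI) (auto simp: path_node_def split: if_splits, presburger+)

lemma CW_eq_path_nodes:
  "CW W = path_node ` {1..} \<union> (if W = D_half then {C0p, C0m} else {})"
proof (intro equalityI subsetI)
  fix c assume c: "c \<in> CW W"
  show "c \<in> path_node ` {1..} \<union> (if W = D_half then {C0p, C0m} else {})"
  proof (cases c)
    case (C0 n)
    then have "c = path_node (2 * n)" and "2 * n \<ge> 1" using c by (auto simp: path_node_def)
    then show ?thesis by blast
  next
    case (C1 n)
    then have "c = path_node (2 * n - 1)" and "2 * n - 1 \<ge> 1" using c by (auto simp: path_node_def)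
    then show ?thesis by blast
  qed (use c in auto)
qed (auto simp: path_node_def split: if_splits)

lemma Iop_path_node:
  assumes "k \<ge> 1"
  shows "Iop W f (path_node (Suc k))
    = 2 * f (path_node (Suc k)) - f (path_node k) - f (path_node (Suc (Suc k)))"
proof (cases "odd k")
  case True
  then obtain m where "k = 2 * m + 1" by (rule oddE)
  with assms Iop_C0[of "Suc m" W f] show ?thesis by (simp add: path_node_def)
next
  case False
  then obtain m where "k = 2 * m" by blast
  with assms Iop_C1[of "Suc m" W f] show ?thesis
    by (simp add: path_node_def algebra_simps)
qed

lemma l2_square_summable_UNIV:
  assumes "l2 W f"
  shows "(\<lambda>c. (cmod (f c))\<^sup>2) summable_on UNIV"
proof -
  have "(\<lambda>c. (cmod (f c))\<^sup>2) summable_on CW W"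
    using assms by (simp add: l2_def)
  moreover have "\<And>c. c \<notin> CW W \<Longrightarrow> f c = 0"
    using assms by (simp add: l2_def)
  ultimately show ?thesis
    by (subst summable_on_cong_neutral[where T = "CW W"]) auto
qed

lemma l2_tendsto_0_along:
  assumes "l2 W f" "inj h"
  shows "(\<lambda>k. f (h k)) \<longlonglongrightarrow> 0"
proof -
  have "(\<lambda>c. (cmod (f c))\<^sup>2) summable_on range h"
    using l2_square_summable_UNIV[OF assms(1)] by (rule summable_on_subset_banach) simp
  then have "(\<lambda>k. (cmod (f (h k)))\<^sup>2) summable_on UNIV"
    using summable_on_reindex[OF assms(2), of "\<lambda>c. (cmod (f c))\<^sup>2"] by (simp add: o_def)
  then have "summable (\<lambda>k. (cmod (f (h k)))\<^sup>2)"
    by (simp add: summable_on_UNIV_nonneg_real_iff)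
  then have "(\<lambda>k. (cmod (f (h k)))\<^sup>2) \<longlonglongrightarrow> 0"
    by (rule summable_LIMSEQ_zero)
  then have "(\<lambda>k. sqrt ((cmod (f (h k)))\<^sup>2)) \<longlonglongrightarrow> sqrt 0"
    by (rule tendsto_real_sqrt)
  then show ?thesis
    by (simp add: tendsto_norm_zero_iff)
qed

definition chebyshev_rec :: "'a::comm_ring_1 \<Rightarrow> (nat \<Rightarrow> 'a) \<Rightarrow> bool" where
  "chebyshev_rec t b \<longleftrightarrow> (\<forall>k. b (Suc (Suc k)) = t * b (Suc k) - b k)"

definition chebyshev_invariant :: "'a::comm_ring_1 \<Rightarrow> 'a \<Rightarrow> 'a \<Rightarrow> 'a" where
  "chebyshev_invariant t x y = x\<^sup>2 - t * x * y + y\<^sup>2"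

lemma chebyshev_invariant_const:
  assumes "chebyshev_rec t b"
  shows "chebyshev_invariant t (b k) (b (Suc k)) = chebyshev_invariant t (b 0) (b 1)"
proof (induction k)
  case (Suc k)
  have rec: "b (Suc (Suc k)) = t * b (Suc k) - b k"
    using assms unfolding chebyshev_rec_def by blast
  have "chebyshev_invariant t (b (Suc k)) (b (Suc (Suc k))) = chebyshev_invariant t (b k) (b (Suc k))"
    unfolding chebyshev_invariant_def rec by (simp add: algebra_simps power2_eq_square)
  then show ?case using Suc by simp
qed simp

lemma chebyshev_invariant_eq_0_if_tendsto_0:
  fixes b :: "nat \<Rightarrow> 'a::real_normed_field"
  assumes "chebyshev_rec t b" "b \<longlonglongrightarrow> 0"
  shows "chebyshev_invariant t (b 0) (b 1) = 0"
proof -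
  have "(\<lambda>k. chebyshev_invariant t (b k) (b (Suc k))) \<longlonglongrightarrow> chebyshev_invariant t 0 0"
    unfolding chebyshev_invariant_def
    by (intro tendsto_intros assms(2) filterlim_compose[OF assms(2) filterlim_Suc])
  then have "(\<lambda>k. chebyshev_invariant t (b 0) (b 1)) \<longlonglongrightarrow> chebyshev_invariant t 0 0"
    by (simp only: chebyshev_invariant_const[OF assms(1)])
  then show ?thesis
    by (simp add: LIMSEQ_const_iff chebyshev_invariant_def)
qed

lemma chebyshev_rec_eq_0:
  assumes "chebyshev_rec t b" "b 0 = 0" "b 1 = 0"
  shows "b k = 0"
proof -
  have "b k = 0 \<and> b (Suc k) = 0"
    by (induction k) (use assms in \<open>auto simp: chebyshev_rec_def\<close>)
  then show ?thesis by simp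
qed

lemma chebyshev_rec_unimodular_tendsto_0:
  fixes b :: "nat \<Rightarrow> 'a::real_normed_field"
  assumes "chebyshev_rec (2 * s) b" "s = 1 \<or> s = -1" "b 1 = s * b 0" "b \<longlonglongrightarrow> 0"
  shows "b 0 = 0"
proof -
  have ss: "s * s = 1" using assms(2) by auto
  have step: "b (Suc k) = s * b k" for k
  proof (induction k)
    case (Suc k)
    have "s * b (Suc k) = (s * s) * b k"
      using Suc by (simp add: mult.assoc)
    then have "b k = s * b (Suc k)"
      using ss by simp
    moreover have "b (Suc (Suc k)) = 2 * s * b (Suc k) - b k"
      using assms(1) unfolding chebyshev_rec_def by blast
    ultimately have "b (Suc (Suc k)) = (2 * s - s) * b (Suc k)"
      by (simp add: left_diff_distrib)
    then show ?case by simp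
  qed (use assms(3) in simp)
  have "norm s = 1"
    using assms(2) by auto
  then have "norm (b k) = norm (b 0)" for k
    by (induction k) (simp_all add: step norm_mult)
  then have "(\<lambda>k. norm (b k)) = (\<lambda>_. norm (b 0))"
    by (rule ext)
  then have "(\<lambda>_. norm (b 0)) \<longlonglongrightarrow> 0"
    using tendsto_norm_zero[OF assms(4)] by simp
  then show ?thesis by (simp add: LIMSEQ_const_iff)
qed

lemma decaying_chebyshev_rec_eq_0_fixed_end:
  fixes b :: "nat \<Rightarrow> 'a::real_normed_field"
  assumes "chebyshev_rec t b" "b \<longlonglongrightarrow> 0" "b 0 = 0"
  shows "b k = 0"
proof -
  have "b 1 = 0"
    using chebyshev_invariant_eq_0_if_tendsto_0[OF assms(1,2)] assms(3)
    by (simp add: chebyshev_invariant_def)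
  then show ?thesis using chebyshev_rec_eq_0 assms(1,3) by blast
qed

lemma decaying_chebyshev_rec_eq_0_reflecting_end:
  fixes b :: "nat \<Rightarrow> 'a::real_normed_field"
  assumes "chebyshev_rec t b" "b \<longlonglongrightarrow> 0" "t * b 0 = 2 * b 1"
  shows "b k = 0"
proof -
  have "b 0 ^ 2 = b 1 ^ 2"
    using chebyshev_invariant_eq_0_if_tendsto_0[OF assms(1,2)] assms(3)
    by (simp add: chebyshev_invariant_def power2_eq_square algebra_simps)
  then obtain s where s: "s = 1 \<or> s = -1" "b 1 = s * b 0"
    by (metis power2_eq_iff mult_1 mult_minus1)
  have "b 0 = 0"
  proof (rule ccontr)
    assume "b 0 \<noteq> 0"
    with assms(3) s have "t = 2 * s" by (auto simp: field_simps)
    with assms s show False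
      using chebyshev_rec_unimodular_tendsto_0[of s b] \<open>b 0 \<noteq> 0\<close> by simp
  qed
  with s have "b 1 = 0" by simp
  then show ?thesis using chebyshev_rec_eq_0 assms(1) \<open>b 0 = 0\<close> by blast
qed

lemma eigenvector_path_recurrence:
  assumes "Iop W f = (\<lambda>c. \<mu> * f c)" "k \<ge> 1"
  shows "f (path_node (Suc (Suc k))) = (2 - \<mu>) * f (path_node (Suc k)) - f (path_node k)"
  using Iop_path_node[OF assms(2), of W f] fun_cong[OF assms(1), of "path_node (Suc k)"]
  by (simp add: algebra_simps)

lemma zero_in_eigenspace: "(\<lambda>_. 0) \<in> eigenspace W \<mu>"
  by (simp add: eigenspace_def l2_def Iop_def fun_eq_iff)

lemma eq_0_if_vanishes_on_CW:
  assumes "l2 W f" "\<And>c. c \<in> CW W \<Longrightarrow> f c = 0"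
  shows "f = (\<lambda>_. 0)"
  using assms by (auto simp: l2_def)

lemma eigenspace_A_half: "eigenspace A_half \<mu> = {\<lambda>_. 0}"
proof (intro equalityI subsetI)
  fix f assume "f \<in> eigenspace A_half \<mu>"
  then have l2: "l2 A_half f" and eig: "Iop A_half f = (\<lambda>c. \<mu> * f c)"
    by (auto simp: eigenspace_def)
  let ?b = "\<lambda>k. f (path_node k)"
  have b0: "?b 0 = 0"
    using l2 by (simp add: l2_def)
  have "chebyshev_rec (2 - \<mu>) ?b"
    unfolding chebyshev_rec_def
  proof
    fix k
    show "?b (Suc (Suc k)) = (2 - \<mu>) * ?b (Suc k) - ?b k"
    proof (cases "k = 0")
      case True
      then show ?thesis
        using Iop_A_half_C1_1[of f] fun_cong[OF eig, of "C1 1"] b0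
        by (simp add: path_node_def algebra_simps)
    qed (use eigenvector_path_recurrence[OF eig] in simp)
  qed
  then have "?b k = 0" for k
    using decaying_chebyshev_rec_eq_0_fixed_end l2_tendsto_0_along[OF l2 inj_path_node] b0
    by blast
  then show "f \<in> {\<lambda>_. 0}"
    using eq_0_if_vanishes_on_CW[OF l2] CW_eq_path_nodes[of A_half] by auto
qed (simp add: zero_in_eigenspace)

definition fork_vector :: "node \<Rightarrow> complex" where
  "fork_vector c = (if c = C0p then 1 else if c = C0m then -1 else 0)"

lemma fork_vector_in_eigenspace: "(\<lambda>c. a * fork_vector c) \<in> eigenspace D_half 2"
proof -
  have "(\<lambda>c. (cmod (a * fork_vector c))\<^sup>2) summable_on {C0p, C0m}"
    by simp
  then have "(\<lambda>c. (cmod (a * fork_vector c))\<^sup>2) summable_on CW D_half"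
    by (subst summable_on_cong_neutral[where T = "{C0p, C0m}"]) (auto simp: fork_vector_def)
  then have "l2 D_half (\<lambda>c. a * fork_vector c)"
    by (auto simp: l2_def fork_vector_def)
  moreover have "Iop D_half (\<lambda>c. a * fork_vector c) c = 2 * (a * fork_vector c)" for c
  proof (cases c)
    case (C0 n)
    then show ?thesis
      by (cases "n = 0") (auto simp: Iop_outside Iop_C0 fork_vector_def)
  next
    case (C1 n)
    then consider "n = 0" | "n = 1" | "n \<ge> 2" by linarith
    then show ?thesis
    proof cases
      case 2
      show ?thesis
        unfolding C1 2 Iop_D_half_C1_1 by (simp add: fork_vector_def)
    qed (auto simp: C1 Iop_outside Iop_C1 fork_vector_def)
  qed (auto simp: Iop_D_half_fork fork_vector_def)
  ultimately show ?thesis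
    by (simp add: eigenspace_def fun_eq_iff)
qed

lemma eigenvector_D_half_eq_fork:
  assumes "f \<in> eigenspace D_half \<mu>"
  shows "f = (\<lambda>c. f C0p * fork_vector c)" and "(2 - \<mu>) * f C0p = 0"
proof -
  have l2: "l2 D_half f" and eig: "Iop D_half f = (\<lambda>c. \<mu> * f c)"
    using assms by (auto simp: eigenspace_def)
  define t where "t = 2 - \<mu>"
  text \<open>Placing \<open>f C0p + f C0m\<close> at the missing path vertex turns the equation at \<open>C1 1\<close> into
    the path recurrence; the equations at the two fork vertices become \<open>t * b 0 = 2 * b 1\<close>.\<close>
  define b where "b = (\<lambda>k. f (path_node k))(0 := f C0p + f C0m)"
  have fork: "t * f c = f (C1 1)" if "c \<in> {C0p, C0m}" for c
    using Iop_D_half_fork[OF that, of f] fun_cong[OF eig, of c]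
    by (simp add: t_def algebra_simps)
  have rec: "chebyshev_rec t b"
    unfolding chebyshev_rec_def
  proof
    fix k
    show "b (Suc (Suc k)) = t * b (Suc k) - b k"
    proof (cases "k = 0")
      case True
      then show ?thesis
        using Iop_D_half_C1_1[of f] fun_cong[OF eig, of "C1 1"]
        by (simp add: b_def t_def path_node_def algebra_simps)
    qed (use eigenvector_path_recurrence[OF eig] in \<open>simp add: b_def t_def\<close>)
  qed
  have "(\<lambda>k. b (Suc k)) \<longlonglongrightarrow> 0"
    using LIMSEQ_Suc[OF l2_tendsto_0_along[OF l2 inj_path_node]] by (simp add: b_def)
  then have lim: "b \<longlonglongrightarrow> 0"
    by (rule LIMSEQ_imp_Suc)
  have "t * b 0 = 2 * b 1"
    using fork[of C0p] fork[of C0m] by (simp add: b_def path_node_def algebra_simps)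
  then have b_0: "b k = 0" for k
    by (rule decaying_chebyshev_rec_eq_0_reflecting_end[OF rec lim])
  have path_0: "f c = 0" if c: "c \<in> path_node ` {1..}" for c
  proof -
    obtain k where "k \<ge> 1" "c = path_node k"
      using c by auto
    then show ?thesis
      using b_0[of k] by (simp add: b_def)
  qed
  have "f C0m = - f C0p"
    using b_0[of 0] by (simp add: b_def add_eq_0_iff)
  then show "f = (\<lambda>c. f C0p * fork_vector c)"
    using path_0 l2 CW_eq_path_nodes[of D_half]
    by (fastforce simp: fork_vector_def l2_def)
  show "(2 - \<mu>) * f C0p = 0"
    using fork[of C0p] b_0[of 1] by (simp add: b_def t_def path_node_def)
qed

lemma eigenspace_D_half:
  "eigenspace D_half \<mu>
    = (if \<mu> = 2 then {(\<lambda>c. a * fork_vector c) | a. True} else {\<lambda>_. 0})"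
proof (intro equalityI subsetI)
  fix f assume f: "f \<in> eigenspace D_half \<mu>"
  show "f \<in> (if \<mu> = 2 then {(\<lambda>c. a * fork_vector c) | a. True} else {\<lambda>_. 0})"
  proof (cases "\<mu> = 2")
    case True
    then show ?thesis
      using eigenvector_D_half_eq_fork(1)[OF f] by auto
  next
    case False
    then have "f C0p = 0"
      using eigenvector_D_half_eq_fork(2)[OF f] by simp
    then show ?thesis
      using eigenvector_D_half_eq_fork(1)[OF f] False by simp
  qed
qed (auto split: if_splits simp: fork_vector_in_eigenspace zero_in_eigenspace)

lemma kernel_eq_eigenspace_0: "{f. l2 W f \<and> Iop W f = (\<lambda>_. 0)} = eigenspace W 0"
  by (simp add: eigenspace_def)

theorem mainTheorem10:
  shows "point_spectrum A_half = {}
       \<and> point_spectrum D_half = {2}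
       \<and> (\<exists>f0. f0 \<noteq> (\<lambda>_. 0) \<and> eigenspace D_half 2 = {(\<lambda>c. a * f0 c) | a. True})
       \<and> (\<forall>W. {f. l2 W f \<and> Iop W f = (\<lambda>_. 0)} = {(\<lambda>_. 0)})"
proof (intro conjI allI)
  have fork_nonzero: "fork_vector \<noteq> (\<lambda>_. 0)"
    by (auto simp: fork_vector_def fun_eq_iff)
  then have "fork_vector \<in> eigenspace D_half 2 - {\<lambda>_. 0}"
    using fork_vector_in_eigenspace[of 1] by simp
  then show "point_spectrum D_half = {2}"
    by (auto simp: point_spectrum_def eigenspace_D_half split: if_splits)
  show "point_spectrum A_half = {}"
    by (simp add: point_spectrum_def eigenspace_A_half)
  show "\<exists>f0. f0 \<noteq> (\<lambda>_. 0) \<and> eigenspace D_half 2 = {(\<lambda>c. a * f0 c) | a. True}"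
    using fork_nonzero by (auto simp: eigenspace_D_half)
  show "{f. l2 W f \<and> Iop W f = (\<lambda>_. 0)} = {\<lambda>_. 0}" for W
    by (cases W) (simp_all add: kernel_eq_eigenspace_0 eigenspace_A_half eigenspace_D_half)
qed

end
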